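(* Let $X$ be an infinite set and let $w_1, w_2, \ldots \in \{a,b\}^+$ be such that no non-empty proper prefix of any $w_n$ is a suffix of any $w_m$ ($m,n\in\mathbb{N}$), and $w_n$ is not a subword of $w_m$ whenever $m \neq n$. Then $(w_1, w_2, \ldots)$ is a universal sequence for $X^X$.
   Context: $\{a,b\}^+$ is the free semigroup of non-empty words over $\{a,b\}$. $X^X$ is the full transformation monoid of all functions $X\to X$ under composition. A sequence $w_1, w_2, \ldots \in \{a,b\}^+$ is universal for a semigroup $T$ if for every sequence $f_1, f_2, \ldots \in T$ there is a semigroup homomorphism $\Phi: \{a,b\}^+ \to T$ with $(w_n)\Phi = f_n$ for all $n$. *)

theory Defs
  imports Main "HOL-Library.Sublist"
begin

text \<open>The two-letter alphabet; non-empty lists over it model the free semigroup.\<close>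
datatype letter = A | B

text \<open>Following the paper, maps act on the right, so the product
f g in X^X means "first f, then g", i.e. the function g \<circ> f.\<close>
definition semigroup_hom :: "(letter list \<Rightarrow> ('x \<Rightarrow> 'x)) \<Rightarrow> bool" where
  "semigroup_hom \<Phi> \<longleftrightarrow>
     (\<forall>u v. u \<noteq> [] \<longrightarrow> v \<noteq> [] \<longrightarrow> \<Phi> (u @ v) = \<Phi> v \<circ> \<Phi> u)"

definition universal_seq :: "(nat \<Rightarrow> letter list) \<Rightarrow> ('x itself) \<Rightarrow> bool" where
  "universal_seq w TYPE('x) \<longleftrightarrow>
     (\<forall>f :: nat \<Rightarrow> ('x \<Rightarrow> 'x). \<exists>\<Phi>. semigroup_hom \<Phi> \<and> (\<forall>n. \<Phi> (w n) = f n))"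

end

theory Submission
  imports Defs "HOL-Library.Countable_Set_Type"
begin

text \<open>Since X is infinite, X is in bijection with X \<times> {a,b}*, so it suffices to let the free
semigroup act on pairs (x, v) with a buffer v.  Reading a letter appends it to the buffer;
as soon as the buffer ends in some w n, that occurrence is deleted and f n is applied.
The hypotheses on the words guarantee that while w n is read, no word is completed before
its last letter, and then only w n itself, so reading w n acts exactly as f n.\<close>

instance letter :: countable
  by countable_datatype

unbundle cardinal_syntax

lemma infinite_UNIV_bij_times_countable:
  assumes "infinite (UNIV :: 'x set)"
  shows "\<exists>h :: 'x \<Rightarrow> 'x \<times> 'c :: countable. bij h"
proof -
  have "|UNIV :: 'c set| \<le>o |UNIV :: nat set|"
    using countable_card_of_nat countableI_type by blast
  moreover have "|UNIV :: nat set| \<le>o |UNIV :: 'x set|"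
    using assms infinite_iff_card_of_nat by blast
  ultimately have "|(UNIV :: 'x set) \<times> (UNIV :: 'c set)| =o |UNIV :: 'x set|"
    using card_of_Times_infinite[OF assms, of "UNIV :: 'c set"] ordLeq_transitive by auto
  then obtain g where "bij_betw g (UNIV \<times> UNIV :: ('x \<times> 'c) set) (UNIV :: 'x set)"
    using card_of_ordIso by blast
  then have "bij (inv g)"
    by (simp add: bij_betw_inv_into)
  then show ?thesis by blast
qed

lemma semigroup_hom_conj_foldl:
  assumes "bij h"
  shows "semigroup_hom (\<lambda>u x. inv h (foldl act (h x) u))"
  using assms by (simp add: semigroup_hom_def fun_eq_iff bij_is_surj surj_f_inv_f)

locale overlap_free_code =
  fixes w :: "nat \<Rightarrow> letter list"
  assumes nonempty: "w n \<noteq> []"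
    and no_overlap: "u \<noteq> [] \<Longrightarrow> strict_prefix u (w n) \<Longrightarrow> \<not> suffix u (w m)"
    and no_sublist: "m \<noteq> n \<Longrightarrow> \<not> sublist (w n) (w m)"
begin

lemma not_suffix_append_strict_prefix:
  assumes "p \<noteq> []" and "strict_prefix p (w n)"
  shows "\<not> suffix (w m) (v @ p)"
proof
  assume "suffix (w m) (v @ p)"
  then consider "suffix (w m) p" | "suffix p (w m)"
    by (metis suffix_append suffixI)
  then show False
  proof cases
    case 1
    then have "length (w m) < length (w n)"
      using prefix_length_less[OF assms(2)] by (auto dest: suffix_length_le)
    moreover have "sublist (w m) (w n)"
      using 1 assms(2) by (meson strict_prefix_def prefix_imp_sublist
          suffix_imp_sublist sublist_order.order_trans)
    ultimately show False using no_sublist[of n m] by auto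
  next
    case 2
    then show False using no_overlap assms by blast
  qed
qed

lemma append_word_eq_iff: "v @ w n = v' @ w n' \<longleftrightarrow> n = n' \<and> v = v'"
proof
  assume eq: "v @ w n = v' @ w n'"
  then have "suffix (w n) (w n') \<or> suffix (w n') (w n)"
    by (metis suffixI suffix_same_cases)
  then have "n = n'"
    using no_sublist[of n n'] no_sublist[of n' n] by (auto dest: suffix_imp_sublist)
  with eq show "n = n' \<and> v = v'" by simp
qed simp

text \<open>The decomposition picked by SOME is unique, by \<open>append_word_eq_iff\<close>.\<close>

definition step :: "(nat \<Rightarrow> 's \<times> letter list \<Rightarrow> 's \<times> letter list)
    \<Rightarrow> 's \<times> letter list \<Rightarrow> letter \<Rightarrow> 's \<times> letter list" where
  "step F p c = (case p of (x, v) \<Rightarrow>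
     if \<exists>n v'. v @ [c] = v' @ w n
     then (case SOME (n, v'). v @ [c] = v' @ w n of (n, v') \<Rightarrow> F n (x, v'))
     else (x, v @ [c]))"

lemma step_completing_word: "step F (x, v @ butlast (w n)) (last (w n)) = F n (x, v)"
proof -
  have buf: "v @ butlast (w n) @ [last (w n)] = v @ w n"
    using nonempty by simp
  have "(SOME (n', v'). v @ w n = v' @ w n') = (n, v)"
    by (rule some_equality) (auto simp: append_word_eq_iff)
  then show ?thesis
    unfolding step_def prod.case append_assoc buf by auto
qed

lemma foldl_step_strict_prefix:
  "k < length (w n) \<Longrightarrow> foldl (step F) (x, v) (take k (w n)) = (x, v @ take k (w n))"
proof (induction k)
  case (Suc k)
  have "\<not> suffix (w m) (v @ take (Suc k) (w n))" for m
    using Suc.prems nonempty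
    by (intro not_suffix_append_strict_prefix[of _ n])
      (auto simp: strict_prefix_def take_is_prefix dest: arg_cong[of _ _ length])
  then have "\<not> (\<exists>m v'. v @ take (Suc k) (w n) = v' @ w m)"
    by (auto simp: suffix_def)
  then show ?case
    using Suc by (simp add: take_Suc_conv_app_nth step_def)
qed simp

lemma foldl_step_word: "foldl (step F) (x, v) (w n) = F n (x, v)"
proof -
  have "foldl (step F) (x, v) (butlast (w n)) = (x, v @ butlast (w n))"
    using foldl_step_strict_prefix[where k = "length (w n) - 1" and n = n] nonempty[of n]
    by (simp add: butlast_conv_take)
  then have "foldl (step F) (x, v) (butlast (w n) @ [last (w n)])
      = step F (x, v @ butlast (w n)) (last (w n))"
    by simp
  then show ?thesis
    using nonempty by (simp add: step_completing_word)
qed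

end

theorem corollary3p3:
  fixes w :: "nat \<Rightarrow> letter list"
  assumes "infinite (UNIV :: 'x set)"
    and "\<forall>n. w n \<noteq> []"
    and "\<forall>m n u. u \<noteq> [] \<and> strict_prefix u (w n) \<longrightarrow> \<not> suffix u (w m)"
    and "\<forall>m n. m \<noteq> n \<longrightarrow> \<not> sublist (w n) (w m)"
  shows "universal_seq w TYPE('x)"
  unfolding universal_seq_def
proof
  fix f :: "nat \<Rightarrow> 'x \<Rightarrow> 'x"
  interpret overlap_free_code w
    using assms(2-4) by unfold_locales blast+
  obtain h :: "'x \<Rightarrow> 'x \<times> letter list" where h: "bij h"
    using infinite_UNIV_bij_times_countable[OF assms(1)] by blast
  define F where "F n = h \<circ> f n \<circ> inv h" for n
  define \<Phi> where "\<Phi> u x = inv h (foldl (step F) (h x) u)" for u x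
  have "semigroup_hom \<Phi>"
    unfolding \<Phi>_def using h by (rule semigroup_hom_conj_foldl)
  moreover have "\<Phi> (w n) = f n" for n
  proof
    fix x
    obtain y v where hx: "h x = (y, v)" by fastforce
    have "\<Phi> (w n) x = inv h (F n (h x))"
      unfolding \<Phi>_def hx foldl_step_word ..
    then show "\<Phi> (w n) x = f n x"
      using h by (simp add: F_def bij_is_inj)
  qed
  ultimately show "\<exists>\<Phi>. semigroup_hom \<Phi> \<and> (\<forall>n. \<Phi> (w n) = f n)" by blast
qed

end
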